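(* Let $A$ and $B$ be rings, $f: A\to B$ a ring homomorphism and $J$ a proper ideal of $B$ such that $f^{-1}(J)\cap \mathrm{nil}(A)=(0)$. If $f(A)+J$ is an Armendariz ring, then $A\bowtie^{f}J$ is an Armendariz ring.
   Context: All rings are associative with identity (not necessarily commutative), ring homomorphisms are unital, and ideals are two-sided. $\mathrm{nil}(R)$ denotes the set of nilpotent elements of a ring $R$. For a ring homomorphism $f:A\to B$ and an ideal $J$ of $B$, the amalgamation is the subring $A\bowtie^{f}J=\{(a,f(a)+j)\mid a\in A,\ j\in J\}$ of $A\times B$; $f(A)+J=\{f(a)+j: a\in A, j\in J\}$ is a subring of $B$. A ring $R$ is Armendariz if whenever $p(x)=\sum_{i=0}^n a_ix^i$ and $q(x)=\sum_{j=0}^m b_jx^j$ in $R[x]$ satisfy $p(x)q(x)=0$, then $a_ib_j=0$ for all $i,j$. *)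

theory Defs
  imports Main "HOL-Library.Product_Plus"
begin

definition unital_ring_hom :: "('a::ring_1 \<Rightarrow> 'b::ring_1) \<Rightarrow> bool" where
  "unital_ring_hom f \<longleftrightarrow> f 1 = 1 \<and> (\<forall>x y. f (x + y) = f x + f y) \<and> (\<forall>x y. f (x * y) = f x * f y)"

definition two_sided_ideal :: "'b::ring_1 set \<Rightarrow> bool" where
  "two_sided_ideal J \<longleftrightarrow> 0 \<in> J \<and> (\<forall>x\<in>J. \<forall>y\<in>J. x + y \<in> J) \<and> (\<forall>x\<in>J. - x \<in> J)
     \<and> (\<forall>r x. x \<in> J \<longrightarrow> r * x \<in> J \<and> x * r \<in> J)"

definition proper_ideal :: "'b::ring_1 set \<Rightarrow> bool" where
  "proper_ideal J \<longleftrightarrow> two_sided_ideal J \<and> J \<noteq> UNIV"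

definition nil_elems :: "'a::ring_1 set" where
  "nil_elems = {a. \<exists>n. a ^ n = 0}"

(* Armendariz property for a subring S (given by its carrier) w.r.t. a multiplication:
   polynomials p = sum a_i x^i (deg <= n), q = sum b_j x^j (deg <= m) with coefficients in S,
   coefficients outside the degree range are 0; pq = 0 means every coefficient of the product is 0. *)
definition armendariz_wrt :: "('r::comm_monoid_add \<Rightarrow> 'r \<Rightarrow> 'r) \<Rightarrow> 'r set \<Rightarrow> bool" where
  "armendariz_wrt mul S \<longleftrightarrow>
     (\<forall>(a::nat \<Rightarrow> 'r) (b::nat \<Rightarrow> 'r) (n::nat) (m::nat).
        (\<forall>i\<le>n. a i \<in> S) \<and> (\<forall>j\<le>m. b j \<in> S) \<and> (\<forall>i>n. a i = 0) \<and> (\<forall>j>m. b j = 0)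
        \<and> (\<forall>k. (\<Sum>i\<le>k. mul (a i) (b (k - i))) = 0)
        \<longrightarrow> (\<forall>i\<le>n. \<forall>j\<le>m. mul (a i) (b j) = 0))"

definition armendariz :: "'r::ring_1 set \<Rightarrow> bool" where
  "armendariz S \<longleftrightarrow> armendariz_wrt (*) S"

definition prod_mult :: "'a::times \<times> 'b::times \<Rightarrow> 'a \<times> 'b \<Rightarrow> 'a \<times> 'b" where
  "prod_mult x y = (fst x * fst y, snd x * snd y)"

definition image_plus_ideal :: "('a \<Rightarrow> 'b::plus) \<Rightarrow> 'b set \<Rightarrow> 'b set" where
  "image_plus_ideal f J = {f a + j | a j. j \<in> J}"

definition amalgamation :: "('a \<Rightarrow> 'b::plus) \<Rightarrow> 'b set \<Rightarrow> ('a \<times> 'b) set" where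
  "amalgamation f J = {(a, f a + j) | a j. j \<in> J}"

end

theory Submission
  imports Defs
begin

text \<open>
  The second components of two amalgamation polynomials with product zero lie in the Armendariz
  ring \<open>f(A) + J\<close>, so all their coefficient products vanish. Writing a coefficient of the
  first factor as \<open>(a, f a + u)\<close> and one of the second as \<open>(b, f b + v)\<close> with \<open>u, v \<in> J\<close>,
  the vanishing of \<open>(f a + u)(f b + v)\<close> puts \<open>a b\<close> into the ideal \<open>I = f\<^sup>-\<^sup>1(J)\<close>. Since \<open>I\<close>
  contains no nonzero nilpotents, the usual argument that reduced rings are Armendariz runs
  inside \<open>I\<close>: along each antidiagonal of the product, every coefficient product is shown to
  be zero by cubing it.
\<close>

lemma armendariz_wrtD:
  fixes a b :: "nat \<Rightarrow> 'r::comm_monoid_add"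
  assumes "armendariz_wrt mul S"
    and "\<And>i. i \<le> n \<Longrightarrow> a i \<in> S" and "\<And>j. j \<le> m \<Longrightarrow> b j \<in> S"
    and "\<And>i. n < i \<Longrightarrow> a i = 0" and "\<And>j. m < j \<Longrightarrow> b j = 0"
    and "\<And>k. (\<Sum>i\<le>k. mul (a i) (b (k - i))) = 0"
    and "i \<le> n" and "j \<le> m"
  shows "mul (a i) (b j) = 0"
  using assms unfolding armendariz_wrt_def by blast

lemma armendariz_wrtI:
  assumes "\<And>(a :: nat \<Rightarrow> 'r::comm_monoid_add) b n m i j.
      \<lbrakk>\<forall>i\<le>n. a i \<in> S; \<forall>j\<le>m. b j \<in> S; \<forall>i>n. a i = 0; \<forall>j>m. b j = 0;
       \<forall>k. (\<Sum>i\<le>k. mul (a i) (b (k - i))) = 0; i \<le> n; j \<le> m\<rbrakk>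
      \<Longrightarrow> mul (a i) (b j) = 0"
  shows "armendariz_wrt mul S"
  unfolding armendariz_wrt_def using assms by blast

lemma unital_ring_hom_0:
  assumes "unital_ring_hom f"
  shows "f 0 = 0"
  using assms unfolding unital_ring_hom_def by (metis add_cancel_right_right add_0)

lemma unital_ring_hom_mult:
  assumes "unital_ring_hom f"
  shows "f (x * y) = f x * f y"
  using assms unfolding unital_ring_hom_def by blast

lemma unital_ring_hom_minus:
  assumes "unital_ring_hom f"
  shows "f (- x) = - f x"
proof -
  have "f (- x) + f x = 0"
    using assms unital_ring_hom_0[OF assms] unfolding unital_ring_hom_def by (metis add.left_inverse)
  then show ?thesis by (simp add: eq_neg_iff_add_eq_0)
qed

lemma two_sided_ideal_vimage:
  assumes "unital_ring_hom f" and "two_sided_ideal J"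
  shows "two_sided_ideal (f -` J)"
  using assms unfolding two_sided_ideal_def
  by (simp add: unital_ring_hom_0[OF assms(1)] unital_ring_hom_minus[OF assms(1)]
      unital_ring_hom_mult[OF assms(1)]) (simp add: unital_ring_hom_def)

lemma two_sided_ideal_sandwich:
  assumes "two_sided_ideal I" and "x \<in> I"
  shows "r * x * s \<in> I"
  using assms unfolding two_sided_ideal_def by blast

lemma nil_free_cube_zero:
  assumes "I \<inter> nil_elems \<subseteq> {0}" and "x \<in> I" and "x * x * x = 0"
  shows "x = 0"
proof -
  have "x ^ 3 = 0" using assms(3) by (simp add: power3_eq_cube)
  then show ?thesis using assms(1,2) unfolding nil_elems_def by blast
qed

lemma nil_free_ideal_reverse_zero:
  assumes "two_sided_ideal I" and "I \<inter> nil_elems \<subseteq> {0}"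
    and "a * b = 0" and "x \<in> I"
  shows "b * x * a = 0"
proof -
  let ?z = "b * x * a"
  have "?z * ?z = b * x * (a * b) * x * a" by (simp add: mult.assoc)
  then have "?z * ?z * ?z = 0" using assms(3) by simp
  then show ?thesis
    using nil_free_cube_zero[OF assms(2)] two_sided_ideal_sandwich[OF assms(1,4)] by blast
qed

text \<open>
  One step of the induction: the product \<open>y = a m * b (k - m)\<close> is minus the sum of the other
  terms on the antidiagonal \<open>k\<close>, so \<open>y\<^sup>3\<close> is a sum of terms \<open>a i * b (k - i) * y * y\<close>. Those
  with \<open>i < m\<close> vanish by hypothesis; for \<open>i > m\<close> the product \<open>a m * b (k - i)\<close> lies on an
  earlier antidiagonal, so \<open>b (k - i) * y * a m = 0\<close> by the reverse-zero lemma.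
\<close>

lemma nil_free_antidiagonal_step:
  fixes a b :: "nat \<Rightarrow> 'a::ring_1"
  assumes ideal: "two_sided_ideal I" and nil_free: "I \<inter> nil_elems \<subseteq> {0}"
    and products_in: "\<And>i j. a i * b j \<in> I"
    and conv: "(\<Sum>i\<le>k. a i * b (k - i)) = 0"
    and earlier: "\<And>k' m'. k' < k \<Longrightarrow> m' \<le> k' \<Longrightarrow> a m' * b (k' - m') = 0"
    and left: "\<And>i. i < m \<Longrightarrow> a i * b (k - i) = 0"
    and "m \<le> k"
  shows "a m * b (k - m) = 0"
proof -
  let ?y = "a m * b (k - m)"
  let ?rest = "\<Sum>i\<in>{..k}-{m}. a i * b (k - i)"
  have "(\<Sum>i\<le>k. a i * b (k - i)) = ?y + ?rest"
    using \<open>m \<le> k\<close> by (subst sum.remove[of _ m]) auto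
  then have y_eq: "?y = - ?rest"
    using conv by (simp add: eq_neg_iff_add_eq_0)
  have term_zero: "a i * b (k - i) * ?y * ?y = 0" if i: "i \<in> {..k}-{m}" for i
  proof (cases "i < m")
    case True
    then show ?thesis using left by simp
  next
    case False
    with i have "m + (k - i) < k" by auto
    then have "a m * b (k - i) = 0" using earlier[of "m + (k - i)" m] by simp
    then have "b (k - i) * ?y * a m = 0"
      using nil_free_ideal_reverse_zero[OF ideal nil_free] products_in by blast
    then have "a i * (b (k - i) * ?y * a m) * b (k - m) = 0" by simp
    then show ?thesis by (simp add: mult.assoc)
  qed
  have "?y * ?y * ?y = - (\<Sum>i\<in>{..k}-{m}. a i * b (k - i) * ?y * ?y)"
    by (subst (1) y_eq) (simp add: sum_distrib_right)
  also have "\<dots> = 0" using term_zero by simp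
  finally show ?thesis using nil_free_cube_zero[OF nil_free products_in] by blast
qed

lemma nil_free_convolution_zero_imp_products_zero:
  fixes a b :: "nat \<Rightarrow> 'a::ring_1"
  assumes ideal: "two_sided_ideal I" and nil_free: "I \<inter> nil_elems \<subseteq> {0}"
    and products_in: "\<And>i j. a i * b j \<in> I"
    and conv: "\<And>k. (\<Sum>i\<le>k. a i * b (k - i)) = 0"
  shows "a i * b j = 0"
proof -
  have antidiagonal: "\<forall>m\<le>k. a m * b (k - m) = 0" for k
  proof (induction k rule: less_induct)
    case (less k)
    note earlier = less.IH
    show ?case
    proof (intro allI impI)
      fix m assume "m \<le> k"
      then show "a m * b (k - m) = 0"
      proof (induction m rule: less_induct)
        case (less m)
        show ?case
          by (rule nil_free_antidiagonal_step[OF ideal nil_free products_in conv])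
            (use earlier less in auto)
      qed
    qed
  qed
  show ?thesis using antidiagonal[of "i + j"] by (metis add_diff_cancel_left' le_add1)
qed

lemma sum_prod_mult:
  "(\<Sum>i\<in>A. prod_mult (P i) (Q i)) = ((\<Sum>i\<in>A. fst (P i) * fst (Q i)), (\<Sum>i\<in>A. snd (P i) * snd (Q i)))"
  by (simp add: prod_mult_def fst_sum snd_sum prod_eq_iff)

lemma snd_amalgamation:
  "x \<in> amalgamation f J \<Longrightarrow> snd x \<in> image_plus_ideal f J"
  unfolding amalgamation_def image_plus_ideal_def by auto blast

lemma amalgamation_snd_product_zero_imp_fst_vimage:
  assumes "unital_ring_hom f" and "two_sided_ideal J"
    and "x \<in> amalgamation f J" and "y \<in> amalgamation f J" and "snd x * snd y = 0"
  shows "fst x * fst y \<in> f -` J"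
proof -
  obtain a u b v where x: "x = (a, f a + u)" "u \<in> J" and y: "y = (b, f b + v)" "v \<in> J"
    using assms(3,4) unfolding amalgamation_def by blast
  have "f (a * b) = - (f a * v + u * (f b + v))"
    using assms(5) x y
    by (simp add: unital_ring_hom_mult[OF assms(1)] algebra_simps eq_neg_iff_add_eq_0)
  moreover have "- (f a * v + u * (f b + v)) \<in> J"
    using assms(2) x y unfolding two_sided_ideal_def by blast
  ultimately show ?thesis using x y by simp
qed

theorem theorem2p2:
  fixes f :: "'a::ring_1 \<Rightarrow> 'b::ring_1" and J :: "'b set"
  assumes "unital_ring_hom f"
    and "proper_ideal J"
    and "f -` J \<inter> nil_elems = {0}"
    and "armendariz (image_plus_ideal f J)"
  shows "armendariz_wrt prod_mult (amalgamation f J)"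
proof -
  have ideal: "two_sided_ideal J" using assms(2) unfolding proper_ideal_def by blast
  show ?thesis
  proof (rule armendariz_wrtI)
    fix P Q :: "nat \<Rightarrow> 'a \<times> 'b" and n m i j :: nat
    assume P_in: "\<forall>i\<le>n. P i \<in> amalgamation f J" and Q_in: "\<forall>j\<le>m. Q j \<in> amalgamation f J"
      and P_high: "\<forall>i>n. P i = 0" and Q_high: "\<forall>j>m. Q j = 0"
      and conv: "\<forall>k. (\<Sum>i\<le>k. prod_mult (P i) (Q (k - i))) = 0"
      and "i \<le> n" "j \<le> m"
    have "\<forall>k. (\<Sum>i\<le>k. snd (P i) * snd (Q (k - i))) = 0"
      using conv by (simp add: sum_prod_mult prod_eq_iff)
    then have snd_zero: "snd (P i') * snd (Q j') = 0" if "i' \<le> n" "j' \<le> m" for i' j'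
      using that P_in Q_in P_high Q_high
      by (intro armendariz_wrtD[OF assms(4)[unfolded armendariz_def]]) (auto simp: snd_amalgamation)
    have fst_in: "fst (P i') * fst (Q j') \<in> f -` J" for i' j'
    proof (cases "i' \<le> n \<and> j' \<le> m")
      case True
      then show ?thesis
        using P_in Q_in snd_zero
        by (intro amalgamation_snd_product_zero_imp_fst_vimage[OF assms(1) ideal]) auto
    next
      case False
      then show ?thesis
        using P_high Q_high ideal unital_ring_hom_0[OF assms(1)]
        by (auto simp: two_sided_ideal_def not_le)
    qed
    have fst_conv: "(\<Sum>i\<le>k. fst (P i) * fst (Q (k - i))) = 0" for k
      using conv by (simp add: sum_prod_mult prod_eq_iff)
    have "fst (P i) * fst (Q j) = 0"
      using nil_free_convolution_zero_imp_products_zero[OF two_sided_ideal_vimage[OF assms(1) ideal],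
          of "\<lambda>i. fst (P i)" "\<lambda>j. fst (Q j)"] assms(3) fst_in fst_conv
      by simp
    then show "prod_mult (P i) (Q j) = 0"
      using snd_zero \<open>i \<le> n\<close> \<open>j \<le> m\<close> by (simp add: prod_mult_def prod_eq_iff)
  qed
qed

end
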